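(* Fix $\alpha\in(0,1/2)$ and treatment qualities $q_1,q_3\in(0,1)$. Let $M(q_1,q_3)=\frac{2(4\alpha+1)}{3(1-q_3)}+\frac{2(3-4\alpha)}{3(1-q_1)}$ be the treatment's steady-state total user population and $Q(q_1,q_3)=\dfrac{q_3\frac{2(4\alpha+1)}{3(1-q_3)}+q_1\frac{2(3-4\alpha)}{3(1-q_1)}}{M(q_1,q_3)}$ its steady-state average recommendation quality (ARQ). Let $m^*=\frac{16(4\alpha+3)}{9}$ and $\overline{q}^*=\frac{8\alpha+3}{8\alpha+6}$ be the status quo's steady-state total population and ARQ. Then $M(q_1,q_3)>m^*$ if and only if $Q(q_1,q_3)>\overline{q}^*$, and $M(q_1,q_3)<m^*$ if and only if $Q(q_1,q_3)<\overline{q}^*$.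
   Context: Model: users have types $(x,e)\in\{1/4,3/4\}^2$; each period a unit mass of new users arrives with type distribution $F(3/4,3/4)=F(1/4,1/4)=\alpha$, $F(3/4,1/4)=F(1/4,3/4)=1/2-\alpha$. An algorithm assigns recommendation quality $q(x)\in(0,1)$ to segment $x$; a user of type $(x,e)$ churns each period with probability $(1-q(x))(1-e)$. The steady-state mass of type $(x,e)$ is $m(x,e)=F(x,e)/((1-q(x))(1-e))$; total population is $\sum_{x,e}m(x,e)$ and steady-state ARQ is $\sum_x q(x)\sum_e m(x,e)/\sum_{x,e}m(x,e)$. The status quo is $q^*(x)=x$; the treatment has $q(1/4)=q_1$, $q(3/4)=q_3$. The formulas for $M,Q,m^*,\overline{q}^*$ in the claim are these quantities written out. *)

theory Defs
  imports Complex_Main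
begin

definition popM :: "real \<Rightarrow> real \<Rightarrow> real \<Rightarrow> real" where
  "popM \<alpha> q1 q3 = 2 * (4 * \<alpha> + 1) / (3 * (1 - q3)) + 2 * (3 - 4 * \<alpha>) / (3 * (1 - q1))"

definition arqQ :: "real \<Rightarrow> real \<Rightarrow> real \<Rightarrow> real" where
  "arqQ \<alpha> q1 q3 =
     (q3 * (2 * (4 * \<alpha> + 1) / (3 * (1 - q3))) + q1 * (2 * (3 - 4 * \<alpha>) / (3 * (1 - q1))))
     / popM \<alpha> q1 q3"

definition mstar :: "real \<Rightarrow> real" where
  "mstar \<alpha> = 16 * (4 * \<alpha> + 3) / 9"

definition qbarstar :: "real \<Rightarrow> real" where
  "qbarstar \<alpha> = (8 * \<alpha> + 3) / (8 * \<alpha> + 6)"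

end

theory Submission
  imports Defs
begin

text \<open>Segment \<open>x\<close> contributes the steady-state mass \<open>w\<^sub>x / (1 - q(x))\<close>, where
  \<open>w\<^sub>x = \<Sum>\<^sub>e F(x,e) / (1 - e)\<close> does not depend on the algorithm, and
  \<open>q w / (1 - q) = w / (1 - q) - w\<close>. Hence the ARQ equals \<open>1 - W / M\<close> with
  \<open>W = \<Sum>\<^sub>x w\<^sub>x = 8/3\<close> for every algorithm, status quo included, so the ARQ
  is a strictly increasing function of the total population \<open>M\<close>.\<close>

lemma arqQ_eq_one_minus_arrivals_over_popM:
  assumes "q1 \<noteq> 1" "q3 \<noteq> 1" "popM \<alpha> q1 q3 \<noteq> 0"
  shows "arqQ \<alpha> q1 q3 = 1 - (8/3) / popM \<alpha> q1 q3"
proof -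
  have "q3 * (2 * (4 * \<alpha> + 1) / (3 * (1 - q3))) + q1 * (2 * (3 - 4 * \<alpha>) / (3 * (1 - q1)))
      = popM \<alpha> q1 q3 - 8/3"
  proof -
    \<comment> \<open>the simplifier would turn \<open>1 - q \<noteq> 0\<close> back into \<open>q \<noteq> 1\<close>, which \<open>field_simps\<close> cannot use\<close>
    define u v where "u = 1 - q1" and "v = 1 - q3"
    have q: "q1 = 1 - u" "q3 = 1 - v" and "u \<noteq> 0" "v \<noteq> 0"
      using assms(1,2) u_def v_def by auto
    then show ?thesis unfolding popM_def q by (simp add: field_simps)
  qed
  then show ?thesis
    using assms(3) by (simp add: arqQ_def diff_divide_distrib)
qed

lemma qbarstar_eq_one_minus_arrivals_over_mstar:
  assumes "\<alpha> \<noteq> -3/4"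
  shows "qbarstar \<alpha> = 1 - (8/3) / mstar \<alpha>"
proof -
  have "8 * \<alpha> + 6 \<noteq> 0" using assms by simp
  then show ?thesis by (simp add: qbarstar_def mstar_def field_simps)
qed

lemma popM_pos:
  assumes "-1/4 < \<alpha>" "\<alpha> < 3/4" "q1 < 1" "q3 < 1"
  shows "0 < popM \<alpha> q1 q3"
  using assms by (simp add: popM_def add_pos_pos)

lemma mstar_pos:
  assumes "-3/4 < \<alpha>"
  shows "0 < mstar \<alpha>"
  using assms by (simp add: mstar_def)

lemma one_minus_divide_less_iff:
  fixes a b c :: real
  assumes "0 < a" "0 < b" "0 < c"
  shows "1 - c / a < 1 - c / b \<longleftrightarrow> a < b"
  using assms by (simp add: field_simps)

theorem proposition1:
  fixes \<alpha> q1 q3 :: real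
  assumes "0 < \<alpha>" "\<alpha> < 1/2"
    and "0 < q1" "q1 < 1" "0 < q3" "q3 < 1"
  shows "(popM \<alpha> q1 q3 > mstar \<alpha> \<longleftrightarrow> arqQ \<alpha> q1 q3 > qbarstar \<alpha>) \<and>
         (popM \<alpha> q1 q3 < mstar \<alpha> \<longleftrightarrow> arqQ \<alpha> q1 q3 < qbarstar \<alpha>)"
proof -
  have M: "0 < popM \<alpha> q1 q3" and m: "0 < mstar \<alpha>" and W: "(0::real) < 8/3"
    using assms popM_pos mstar_pos by auto
  have "arqQ \<alpha> q1 q3 = 1 - (8/3) / popM \<alpha> q1 q3"
    using assms M by (simp add: arqQ_eq_one_minus_arrivals_over_popM)
  moreover have "qbarstar \<alpha> = 1 - (8/3) / mstar \<alpha>"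
    using assms by (simp add: qbarstar_eq_one_minus_arrivals_over_mstar)
  ultimately show ?thesis
    using one_minus_divide_less_iff[OF M m W] one_minus_divide_less_iff[OF m M W]
    by (simp only:)
qed

end
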